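(* Let $h>0$. Apart from equilibrium points, the flow $(\dagger)$ restricted to the infinity manifold $N_h$ has no closed orbits and no recurrent orbits.
   Context: Let $\Theta(s)=1-s^2$, and let $\lambda\in(0,\pi/4)$ be a constant depending only on the masses. The infinity manifold is $N_h=\{(\tilde v,\tilde s,\tilde u)\in\mathbb R\times[-1,1]\times\mathbb R:\tfrac12(\tilde u^2+\tilde v^2)=h\}$. It is the invariant subset $\{\tilde R=0\}$ of the positive-energy regularized flow $(\dagger)$ of the collinear three-body problem with Hamiltonian $$\tfrac12\mathbf p^TM^{-1}\mathbf p-\sum_{i<j}\alpha_{ij}|q_i-q_j|^{-a}+\sum_{i<j}\beta_{ij}|q_i-q_j|^{-b},$$ where $m_i,\alpha_{ij},\beta_{ij}>0$ and $4<a<b-1$. On $N_h$ the flow is $$\tilde v'=\Theta(\tilde s)\tilde u^2,\qquad \tilde s'=\tfrac1\lambda\Theta(\tilde s)\tilde u,\qquad \tilde u'=-\Theta(\tilde s)\tilde u\tilde v.$$ *)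

theory Defs
  imports "HOL-Analysis.Analysis"
begin

definition Theta :: "real \<Rightarrow> real" where
  "Theta s = 1 - s^2"

text \<open>Vector field of the flow restricted to the infinity manifold (R = 0).\<close>
definition inf_field :: "real \<Rightarrow> real \<times> real \<times> real \<Rightarrow> real \<times> real \<times> real" where
  "inf_field lam p = (case p of (v, s, u) \<Rightarrow>
      (Theta s * u^2, (1 / lam) * Theta s * u, - Theta s * u * v))"

definition N_h :: "real \<Rightarrow> (real \<times> real \<times> real) set" where
  "N_h h = {(v, s, u). -1 \<le> s \<and> s \<le> 1 \<and> (u^2 + v^2) / 2 = h}"

definition is_orbit :: "real \<Rightarrow> real \<Rightarrow> (real \<Rightarrow> real \<times> real \<times> real) \<Rightarrow> bool" where
  "is_orbit lam h x \<longleftrightarrow>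
     (\<forall>t. x t \<in> N_h h) \<and> (\<forall>t. (x has_vector_derivative inf_field lam (x t)) (at t))"

definition equilibrium :: "real \<Rightarrow> real \<times> real \<times> real \<Rightarrow> bool" where
  "equilibrium lam p \<longleftrightarrow> inf_field lam p = 0"

definition closed_orbit :: "real \<Rightarrow> (real \<Rightarrow> real \<times> real \<times> real) \<Rightarrow> bool" where
  "closed_orbit lam x \<longleftrightarrow>
     (\<exists>T>0. \<forall>t. x (t + T) = x t) \<and> \<not> equilibrium lam (x 0)"

text \<open>Recurrent orbit: the initial point lies in its own omega-limit set
  or in its own alpha-limit set.\<close>
definition recurrent :: "(real \<Rightarrow> real \<times> real \<times> real) \<Rightarrow> bool" where
  "recurrent x \<longleftrightarrow>
     (\<exists>tn :: nat \<Rightarrow> real. filterlim tn at_top sequentially \<and> (\<lambda>n. x (tn n)) \<longlonglongrightarrow> x 0) \<or>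
     (\<exists>tn :: nat \<Rightarrow> real. filterlim tn at_bot sequentially \<and> (\<lambda>n. x (tn n)) \<longlonglongrightarrow> x 0)"

end

theory Submission
  imports Defs
begin

(* Proof idea: the first coordinate v is a Lyapunov function for the flow on N_h.
   Indeed v' = Theta(s) u^2 >= 0 since |s| <= 1, so v is nondecreasing along every
   orbit, and it increases strictly through every point that is not an equilibrium
   (there Theta(s) u^2 > 0). A nondecreasing periodic function is constant, and a
   nondecreasing function whose values along times tending to +oo (or -oo) return to
   its value at 0 is bounded by that value on the right (left). Both conclusions are
   incompatible with strict increase at time 0. *)

lemma mono_periodic_const:
  fixes g :: "real \<Rightarrow> real"
  assumes mono: "mono g" and T: "T > 0" and per: "\<And>t. g (t + T) = g t"
  shows "g a = g b"
proof -
  have shift: "g (t + real n * T) = g t" for t and n :: nat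
  proof (induction n)
    case (Suc n)
    have "t + real (Suc n) * T = (t + real n * T) + T" by (simp add: algebra_simps)
    then show ?case using Suc per by (simp only:)
  qed simp
  have le: "g c \<le> g d" for c d
  proof -
    obtain n :: nat where "c - d \<le> real n * T"
      using reals_Archimedean3[OF T] by (meson less_le_not_le nle_le)
    then have "g c \<le> g (d + real n * T)" by (intro monoD[OF mono]) simp
    then show "g c \<le> g d" by (simp add: shift)
  qed
  show ?thesis using le[of a b] le[of b a] by simp
qed

lemma mono_return_at_top:
  fixes g :: "real \<Rightarrow> real"
  assumes mono: "mono g" and tn: "filterlim tn at_top sequentially"
    and lim: "(\<lambda>n. g (tn n)) \<longlonglongrightarrow> g 0"
  shows "g t \<le> g 0"
proof -
  have "eventually (\<lambda>n. t \<le> tn n) sequentially"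
    using tn by (simp add: filterlim_at_top)
  then have "eventually (\<lambda>n. g t \<le> g (tn n)) sequentially"
    by eventually_elim (rule monoD[OF mono])
  then show ?thesis using tendsto_lowerbound[OF lim] by simp
qed

lemma mono_return_at_bot:
  fixes g :: "real \<Rightarrow> real"
  assumes mono: "mono g" and tn: "filterlim tn at_bot sequentially"
    and lim: "(\<lambda>n. g (tn n)) \<longlonglongrightarrow> g 0"
  shows "g 0 \<le> g t"
proof -
  have "eventually (\<lambda>n. tn n \<le> t) sequentially"
    using tn by (simp add: filterlim_at_bot)
  then have "eventually (\<lambda>n. g (tn n) \<le> g t) sequentially"
    by eventually_elim (rule monoD[OF mono])
  then show ?thesis using tendsto_upperbound[OF lim] by simp
qed

lemma Theta_nonneg:
  assumes "-1 \<le> s" "s \<le> 1"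
  shows "Theta s \<ge> 0"
proof -
  have "s^2 \<le> 1" using assms by (simp add: abs_square_le_1)
  then show ?thesis by (simp add: Theta_def)
qed

lemma orbit_v_derivative:
  assumes "is_orbit lam h x"
  shows "((\<lambda>t. fst (x t)) has_real_derivative
          Theta (fst (snd (x t))) * (snd (snd (x t)))^2) (at t)"
proof -
  have "(x has_vector_derivative inf_field lam (x t)) (at t)"
    using assms unfolding is_orbit_def by blast
  then have "((\<lambda>t. fst (x t)) has_vector_derivative fst (inf_field lam (x t))) (at t)"
    unfolding has_vector_derivative_def by (auto dest: has_derivative_fst)
  moreover have "fst (inf_field lam (x t)) = Theta (fst (snd (x t))) * (snd (snd (x t)))^2"
    by (simp add: inf_field_def split: prod.splits)
  ultimately show ?thesis by (simp add: has_real_derivative_iff_has_vector_derivative)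
qed

lemma orbit_v_speed_nonneg:
  assumes "is_orbit lam h x"
  shows "Theta (fst (snd (x t))) * (snd (snd (x t)))^2 \<ge> 0"
proof -
  have "x t \<in> N_h h" using assms unfolding is_orbit_def by blast
  then have "Theta (fst (snd (x t))) \<ge> 0"
    unfolding N_h_def by (auto intro: Theta_nonneg split: prod.splits)
  then show ?thesis by simp
qed

lemma orbit_v_mono:
  assumes "is_orbit lam h x"
  shows "mono (\<lambda>t. fst (x t))"
  using DERIV_nonneg_imp_nondecreasing orbit_v_derivative[OF assms]
    orbit_v_speed_nonneg[OF assms]
  by (metis monoI)

lemma orbit_v_strict_at_0:
  assumes orbit: "is_orbit lam h x" and ne: "\<not> equilibrium lam (x 0)"
  obtains e where "e > 0" "fst (x (-e)) < fst (x 0)" "fst (x 0) < fst (x e)"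
proof -
  obtain v s u where x0: "x 0 = (v, s, u)" by (cases "x 0") auto
  have "Theta s * u^2 \<noteq> 0"
    using ne x0 unfolding equilibrium_def inf_field_def by (auto simp: zero_prod_def)
  moreover have "Theta s * u^2 \<ge> 0" using orbit_v_speed_nonneg[OF orbit, of 0] x0 by simp
  ultimately have pos: "Theta s * u^2 > 0" by linarith
  have D: "((\<lambda>t. fst (x t)) has_real_derivative Theta s * u^2) (at 0)"
    using orbit_v_derivative[OF orbit, of 0] x0 by simp
  obtain d1 where d1: "d1 > 0" "\<And>h. h > 0 \<Longrightarrow> h < d1 \<Longrightarrow> fst (x 0) < fst (x (0 + h))"
    using DERIV_pos_inc_right[OF D pos] by blast
  obtain d2 where d2: "d2 > 0" "\<And>h. h > 0 \<Longrightarrow> h < d2 \<Longrightarrow> fst (x (0 - h)) < fst (x 0)"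
    using DERIV_pos_inc_left[OF D pos] by blast
  define e where "e = min d1 d2 / 2"
  have "e > 0" "e < d1" "e < d2" using d1 d2 by (auto simp: e_def)
  then show ?thesis using d1(2)[of e] d2(2)[of e] that[of e] by simp
qed

lemma orbit_not_closed:
  assumes orbit: "is_orbit lam h x"
  shows "\<not> closed_orbit lam x"
proof
  assume "closed_orbit lam x"
  then obtain T where T: "T > 0" "\<And>t. x (t + T) = x t" and ne: "\<not> equilibrium lam (x 0)"
    unfolding closed_orbit_def by blast
  obtain e where "e > 0" "fst (x 0) < fst (x e)"
    using orbit_v_strict_at_0[OF orbit ne] by blast
  moreover have "fst (x e) = fst (x 0)"
    using mono_periodic_const[OF orbit_v_mono[OF orbit] T(1)] T(2) by simp
  ultimately show False by simp
qed

lemma orbit_recurrent_equilibrium: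
  assumes orbit: "is_orbit lam h x" and rec: "recurrent x"
  shows "equilibrium lam (x 0)"
proof (rule ccontr)
  assume "\<not> equilibrium lam (x 0)"
  then obtain e where e: "fst (x (-e)) < fst (x 0)" "fst (x 0) < fst (x e)"
    using orbit_v_strict_at_0[OF orbit] by blast
  note mono = orbit_v_mono[OF orbit]
  from rec consider
      (forward) tn where "filterlim tn at_top sequentially" "(\<lambda>n. x (tn n)) \<longlonglongrightarrow> x 0"
    | (backward) tn where "filterlim tn at_bot sequentially" "(\<lambda>n. x (tn n)) \<longlonglongrightarrow> x 0"
    unfolding recurrent_def by blast
  then show False
  proof cases
    case forward
    then have "fst (x e) \<le> fst (x 0)"
      using mono_return_at_top[OF mono] tendsto_fst by blast
    with e show False by simp
  next
    case backward
    then have "fst (x 0) \<le> fst (x (-e))"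
      using mono_return_at_bot[OF mono] tendsto_fst by blast
    with e show False by simp
  qed
qed

theorem mainTheorem7:
  fixes lam h :: real
  assumes "0 < lam" and "lam < pi / 4" and "0 < h"
  shows "\<forall>x. is_orbit lam h x \<longrightarrow>
           \<not> closed_orbit lam x \<and> (recurrent x \<longrightarrow> equilibrium lam (x 0))"
  using orbit_not_closed orbit_recurrent_equilibrium by blast

end
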